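(* Let $k\in[n-1]$ and $w\in S_n^{k\searrow}$. Let $C_1$ be an increasing $k$-chain from $u$ to $v$ and $C_2$ an increasing $1$-chain from $v$ to $w$. Apply Lenart's growth diagram to $(k,1,C_1,C_2)$, obtaining a saturated $1$-chain $C_2'$ from $u$ to some $v'$ and a saturated $k$-chain $C_1'$ from $v'$ to $w$. Then $C_2'$ is an increasing $1$-chain and $C_1'$ is an increasing $k$-chain.
   Context: Permutations in one-line notation; $wt_{i,j}$ is $w$ with positions $i<j$ swapped; $\ell$ the number of inversions. $u\lessdot w$ iff $w=ut_{i,j}$, $i<j$, $\ell(w)=\ell(u)+1$; $u\lessdot_k w$ iff moreover $i\le k<j$. A saturated $k$-chain is $v_1\lessdot_k\cdots\lessdot_k v_d$ ($d\ge1$), of length $d-1$; it is increasing if the smaller of the two values exchanged at each step strictly increases along the chain. $S_n^{k\searrow}=\{v:v(k+1)>\dots>v(n)\}$. Lenart's growth diagram: given $k_1,k_2\in[n-1]$, a saturated $k_1$-chain $C_1$ from $u$ to $v$ and a saturated $k_2$-chain $C_2$ from $v$ to $w$, write the concatenated chain with each step labelled $k_1$ or $k_2$. A local move applies to a segment $a\xrightarrow{k_1}b\xrightarrow{k_2}c$ (with $a\lessdot_{k_1}b\lessdot_{k_2}c$): there is a unique $b'\ne b$ with $a\lessdot b'\lessdot c$; if $a\lessdot_{k_2}b'\lessdot_{k_1}c$, replace the segment by $a\xrightarrow{k_2}b'\xrightarrow{k_1}c$; otherwise (then $a\lessdot_{k_2}b\lessdot_{k_1}c$) replace it by $a\xrightarrow{k_2}b\xrightarrow{k_1}c$.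 Apply local moves until all $k_2$-labelled steps precede all $k_1$-labelled steps; the output is the resulting saturated $k_2$-chain from $u$ to some $v'$ (same length as $C_2$) and saturated $k_1$-chain from $v'$ to $w$ (same length as $C_1$). The output does not depend on the order of moves. *)

theory Defs
  imports Main
begin

text \<open>Permutations of [n] in one-line notation are lists w of length n with
  set w = {1..n}; list index p (0-based) is position p+1.\<close>

definition is_perm :: "nat \<Rightarrow> nat list \<Rightarrow> bool" where
  "is_perm n w \<longleftrightarrow> length w = n \<and> set w = {1..n}"

text \<open>w t_{i+1,j+1}: swap the entries at 0-based list indices i and j.\<close>
definition swap_pos :: "nat list \<Rightarrow> nat \<Rightarrow> nat \<Rightarrow> nat list" where
  "swap_pos w i j = w[i := w ! j, j := w ! i]"

definition inv_num :: "nat list \<Rightarrow> nat" where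
  "inv_num w = card {(i, j). i < j \<and> j < length w \<and> w ! i > w ! j}"

definition covers :: "nat \<Rightarrow> nat list \<Rightarrow> nat list \<Rightarrow> bool" where
  "covers n u w \<longleftrightarrow> is_perm n u \<and>
     (\<exists>i j. i < j \<and> j < n \<and> w = swap_pos u i j \<and> inv_num w = inv_num u + 1)"

text \<open>u \<lessdot>_k w: positions (1-based) i' \<le> k < j', i.e. 0-based i < k \<le> j.\<close>
definition kcovers :: "nat \<Rightarrow> nat \<Rightarrow> nat list \<Rightarrow> nat list \<Rightarrow> bool" where
  "kcovers n k u w \<longleftrightarrow> is_perm n u \<and>
     (\<exists>i j. i < k \<and> k \<le> j \<and> j < n \<and> w = swap_pos u i j \<and> inv_num w = inv_num u + 1)"

definition kchain :: "nat \<Rightarrow> nat \<Rightarrow> nat list list \<Rightarrow> bool" where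
  "kchain n k C \<longleftrightarrow> C \<noteq> [] \<and> is_perm n (hd C) \<and>
     (\<forall>i. i + 1 < length C \<longrightarrow> kcovers n k (C ! i) (C ! (i + 1)))"

definition exch_min :: "nat list \<Rightarrow> nat list \<Rightarrow> nat" where
  "exch_min u w = Min {u ! p | p. p < length u \<and> u ! p \<noteq> w ! p}"

definition increasing_chain :: "nat list list \<Rightarrow> bool" where
  "increasing_chain C \<longleftrightarrow>
     (\<forall>i. i + 2 < length C \<longrightarrow> exch_min (C ! i) (C ! (i + 1)) < exch_min (C ! (i + 1)) (C ! (i + 2)))"

definition S_dec :: "nat \<Rightarrow> nat \<Rightarrow> nat list set" where
  "S_dec n k = {v. is_perm n v \<and> (\<forall>i j. k \<le> i \<and> i < j \<and> j < n \<longrightarrow> v ! i > v ! j)}"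

text \<open>Step labels: L1 = step labelled k1 (from C_1), L2 = step labelled k2 (from C_2).
  Labelled chain: list of permutations vs and labels ts, length vs = length ts + 1.\<close>
datatype lab = L1 | L2

definition local_move :: "nat \<Rightarrow> nat \<Rightarrow> nat \<Rightarrow> nat list list \<times> lab list \<Rightarrow> nat list list \<times> lab list \<Rightarrow> bool" where
  "local_move n k1 k2 X Y \<longleftrightarrow>
    (let vs = fst X; ts = snd X; vs' = fst Y; ts' = snd Y in
     \<exists>p. p + 1 < length ts \<and> length vs = length ts + 1 \<and>
       ts ! p = L1 \<and> ts ! (p + 1) = L2 \<and> ts' = ts[p := L2, p + 1 := L1] \<and>
       (let a = vs ! p; b = vs ! (p + 1); c = vs ! (p + 2) in
         kcovers n k1 a b \<and> kcovers n k2 b c \<and>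
         ((\<exists>b'. b' \<noteq> b \<and> covers n a b' \<and> covers n b' c \<and>
                kcovers n k2 a b' \<and> kcovers n k1 b' c \<and> vs' = vs[p + 1 := b'])
          \<or> ((\<forall>b'. b' \<noteq> b \<and> covers n a b' \<and> covers n b' c \<longrightarrow>
                  \<not> (kcovers n k2 a b' \<and> kcovers n k1 b' c)) \<and> vs' = vs))))"

text \<open>Growth diagram output: (C2', C1') is an output of Lenart's growth diagram on
  (k1, k2, C1, C2) if it is reached from the concatenated labelled chain by local moves
  and all k2-labelled steps precede all k1-labelled steps.\<close>
definition growth_output :: "nat \<Rightarrow> nat \<Rightarrow> nat \<Rightarrow> nat list list \<Rightarrow> nat list list
     \<Rightarrow> nat list list \<Rightarrow> nat list list \<Rightarrow> bool" where
  "growth_output n k1 k2 C1 C2 C2' C1' \<longleftrightarrow>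
    (\<exists>vs. (local_move n k1 k2)\<^sup>*\<^sup>*
             (C1 @ tl C2, replicate (length C1 - 1) L1 @ replicate (length C2 - 1) L2)
             (vs, replicate (length C2 - 1) L2 @ replicate (length C1 - 1) L1)
          \<and> C2' = take (length C2) vs \<and> C1' = drop (length C2 - 1) vs)"

end

theory Submission
  imports Defs "HOL-Combinatorics.Transposition"
begin

(* Run the growth diagram as a grid of squares: the bottom row is C1, the right column is C2,
   every square is one local move, and the outputs C1' and C2' are the top row and the left
   column. A 1-cover swaps position 1 with a later, larger entry, so every 1-chain, in
   particular C2', is increasing. For C1' the rows are processed from bottom to top and each
   row from right to left. The hypothesis that w decreases after position k is only used
   through the weaker property that every ascent of w at positions > k lies above w(1); this
   property passes backwards along 1-covers and through the squares, so it holds at the upper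
   right corner of every square. Under it an explicit case analysis of a square (k-step
   followed by 1-step) determines both output steps, and comparing two adjacent squares of a
   row shows that the smaller exchanged values along the new row still increase. *)

section \<open>Inversions, Bruhat covers and exchanged values\<close>

lemma length_swap_pos [simp]: "length (swap_pos w i j) = length w"
  by (simp add: swap_pos_def)

lemma nth_swap_pos:
  assumes "i < length w" "j < length w"
  shows "swap_pos w i j ! p = (if p = j then w ! i else if p = i then w ! j else w ! p)"
  using assms by (simp add: swap_pos_def nth_list_update)

lemma nth_swap_pos_transpose:
  assumes "i < length w" "j < length w"
  shows "swap_pos w i j ! p = w ! transpose i j p"
  using assms by (auto simp: nth_swap_pos transpose_def)

lemma swap_pos_swap_pos: "i < length w \<Longrightarrow> j < length w \<Longrightarrow> swap_pos (swap_pos w i j) i j = w"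
  by (rule nth_equalityI) (auto simp: nth_swap_pos)

lemma is_perm_length: "is_perm n w \<Longrightarrow> length w = n"
  by (simp add: is_perm_def)

lemma is_perm_distinct: "is_perm n w \<Longrightarrow> distinct w"
  unfolding is_perm_def by (simp add: card_distinct)

lemma is_perm_nth_eq_iff: "is_perm n w \<Longrightarrow> p < n \<Longrightarrow> q < n \<Longrightarrow> w ! p = w ! q \<longleftrightarrow> p = q"
  using is_perm_distinct by (auto simp: is_perm_def nth_eq_iff_index_eq)

lemma is_perm_swap_pos: "is_perm n w \<Longrightarrow> i < n \<Longrightarrow> j < n \<Longrightarrow> is_perm n (swap_pos w i j)"
  unfolding is_perm_def swap_pos_def by simp

definition inversions_on :: "nat \<Rightarrow> (nat \<Rightarrow> nat) \<Rightarrow> (nat \<times> nat) set" where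
  "inversions_on N f = {(p, q). p < q \<and> q < N \<and> f q < f p}"

lemma finite_inversions_on [simp]: "finite (inversions_on N f)"
  by (rule finite_subset[of _ "{..<N} \<times> {..<N}"]) (auto simp: inversions_on_def)

lemma inv_num_eq_card_inversions_on: "inv_num w = card (inversions_on (length w) ((!) w))"
  unfolding inv_num_def inversions_on_def by simp

definition inversions_through :: "nat \<Rightarrow> (nat \<Rightarrow> nat) \<Rightarrow> nat \<Rightarrow> nat \<Rightarrow> (nat \<times> nat) set" where
  "inversions_through N f x r = {pq \<in> inversions_on N f. pq = (r, x) \<or> pq = (x, r)}"

lemma finite_inversions_through [simp]: "finite (inversions_through N f x r)"
  by (rule finite_subset[OF _ finite_inversions_on[of N f]]) (auto simp: inversions_through_def)

lemma card_inversions_through: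
  assumes "r < N" "x < N" "r \<noteq> x"
  shows "card (inversions_through N f x r) = of_bool (if r < x then f x < f r else f r < f x)"
proof -
  have "inversions_through N f x r =
      (if r < x then (if f x < f r then {(r, x)} else {}) else (if f r < f x then {(x, r)} else {}))"
    using assms by (auto simp: inversions_through_def inversions_on_def)
  then show ?thesis
    by simp
qed

lemma inversions_on_split:
  assumes "i < j" "j < N"
  defines "R \<equiv> {r. r < N \<and> r \<noteq> i \<and> r \<noteq> j}"
  shows "inversions_on N f =
      {(p, q) \<in> inversions_on N f. p \<notin> {i, j} \<and> q \<notin> {i, j}} \<union> {(p, q) \<in> inversions_on N f. p = i \<and> q = j}
      \<union> (\<Union>r\<in>R. inversions_through N f i r \<union> inversions_through N f j r)"
    (is "_ = ?O \<union> ?P \<union> ?U")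
proof
  show "inversions_on N f \<subseteq> ?O \<union> ?P \<union> ?U"
  proof
    fix pq assume pq: "pq \<in> inversions_on N f"
    obtain p q where pq_eq: "pq = (p, q)" by fastforce
    show "pq \<in> ?O \<union> ?P \<union> ?U"
    proof (cases "pq \<in> ?O \<union> ?P")
      case False
      then consider "p \<in> {i, j}" "q \<in> R" | "q \<in> {i, j}" "p \<in> R"
        using pq assms unfolding pq_eq by (auto simp: inversions_on_def)
      then show ?thesis
      proof cases
        case 1
        then have "pq \<in> inversions_through N f p q" using pq by (simp add: inversions_through_def pq_eq)
        with 1 show ?thesis by blast
      next
        case 2
        then have "pq \<in> inversions_through N f q p" using pq by (simp add: inversions_through_def pq_eq)
        with 2 show ?thesis by blast
      qed
    qed blast
  qed
qed (auto simp: inversions_through_def)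

lemma card_inversions_on_split:
  assumes "i < j" "j < N"
  defines "R \<equiv> {r. r < N \<and> r \<noteq> i \<and> r \<noteq> j}"
  shows "card (inversions_on N f) =
      card {(p, q) \<in> inversions_on N f. p \<notin> {i, j} \<and> q \<notin> {i, j}} + of_bool (f j < f i)
      + (\<Sum>r\<in>R. card (inversions_through N f i r) + card (inversions_through N f j r))"
proof -
  let ?O = "{(p, q) \<in> inversions_on N f. p \<notin> {i, j} \<and> q \<notin> {i, j}}"
  let ?P = "{(p, q) \<in> inversions_on N f. p = i \<and> q = j}"
  let ?U = "\<Union>r\<in>R. inversions_through N f i r \<union> inversions_through N f j r"
  have finite: "finite R" "finite ?O" "finite ?P" "finite ?U"
    by (auto simp: R_def intro: finite_subset[OF _ finite_inversions_on[of N f]])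
  have "?P = (if f j < f i then {(i, j)} else {})"
    using assms by (auto simp: inversions_on_def)
  then have card_P: "card ?P = of_bool (f j < f i)"
    by simp
  have "card ?U = (\<Sum>r\<in>R. card (inversions_through N f i r \<union> inversions_through N f j r))"
    by (rule card_UN_disjoint) (use assms in \<open>auto simp: inversions_through_def\<close>)
  also have "\<dots> = (\<Sum>r\<in>R. card (inversions_through N f i r) + card (inversions_through N f j r))"
    by (intro sum.cong refl card_Un_disjoint) (use assms in \<open>auto simp: inversions_through_def\<close>)
  finally have card_U: "card ?U = \<dots>" .
  have "card (inversions_on N f) = card (?O \<union> (?P \<union> ?U))"
    using inversions_on_split[OF assms(1,2), of f] by (simp add: R_def Un_assoc)
  also have "\<dots> = card ?O + card (?P \<union> ?U)"
    by (rule card_Un_disjoint) (use finite in \<open>auto simp: inversions_through_def\<close>)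
  also have "card (?P \<union> ?U) = card ?P + card ?U"
    by (rule card_Un_disjoint) (use finite assms in \<open>auto simp: inversions_through_def R_def\<close>)
  finally show ?thesis
    using card_P card_U by simp
qed

text \<open>Only the positions strictly between i and j with a value strictly between f i and f j
  change their inversions with i and j, and each of them gains two.\<close>

lemma card_inversions_on_transpose:
  assumes "i < j" "j < N" "inj_on f {..<N}" "f i < f j"
  shows "card (inversions_on N (f \<circ> transpose i j)) =
      card (inversions_on N f) + 1 + 2 * card {r. i < r \<and> r < j \<and> f i < f r \<and> f r < f j}"
proof -
  let ?g = "f \<circ> transpose i j"
  define R where "R = {r. r < N \<and> r \<noteq> i \<and> r \<noteq> j}"
  let ?between = "\<lambda>r. i < r \<and> r < j \<and> f i < f r \<and> f r < f j"
  have same_outside: "{(p, q) \<in> inversions_on N ?g. p \<notin> {i, j} \<and> q \<notin> {i, j}} =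
      {(p, q) \<in> inversions_on N f. p \<notin> {i, j} \<and> q \<notin> {i, j}}"
    by (auto simp: inversions_on_def)
  have through: "card (inversions_through N ?g i r) + card (inversions_through N ?g j r) =
      card (inversions_through N f i r) + card (inversions_through N f j r) + 2 * of_bool (?between r)"
    if "r \<in> R" for r
  proof -
    have r: "r < N" "r \<noteq> i" "r \<noteq> j"
      using that by (auto simp: R_def)
    then have "f r \<noteq> f i" "f r \<noteq> f j"
      using assms by (auto dest: inj_onD)
    then show ?thesis
      using r assms by (simp add: card_inversions_through)
  qed
  have "(\<Sum>r\<in>R. of_bool (?between r) :: nat) = card (R \<inter> {r. ?between r})"
    by (simp add: R_def)
  also have "R \<inter> {r. ?between r} = {r. ?between r}"
    using assms(2) by (auto simp: R_def)
  finally have count: "(\<Sum>r\<in>R. of_bool (?between r) :: nat) = card {r. ?between r}" .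
  have "(\<Sum>r\<in>R. card (inversions_through N ?g i r) + card (inversions_through N ?g j r)) =
      (\<Sum>r\<in>R. card (inversions_through N f i r) + card (inversions_through N f j r)
        + 2 * of_bool (?between r))"
    by (rule sum.cong[OF refl through])
  also have "\<dots> = (\<Sum>r\<in>R. card (inversions_through N f i r) + card (inversions_through N f j r))
      + 2 * card {r. ?between r}"
    by (simp add: sum.distrib sum_distrib_left[symmetric] count)
  finally have sums: "(\<Sum>r\<in>R. card (inversions_through N ?g i r) + card (inversions_through N ?g j r)) =
      (\<Sum>r\<in>R. card (inversions_through N f i r) + card (inversions_through N f j r))
      + 2 * card {r. ?between r}" .
  have "of_bool (?g j < ?g i) = (1::nat)" "of_bool (f j < f i) = (0::nat)"
    using assms(1,4) by auto
  then show ?thesis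
    using card_inversions_on_split[OF assms(1,2), of ?g, folded R_def]
      card_inversions_on_split[OF assms(1,2), of f, folded R_def]
    unfolding same_outside sums by linarith
qed

lemma inv_num_swap_pos:
  assumes "is_perm n a" "i < j" "j < n" "a ! i < a ! j"
  shows "inv_num (swap_pos a i j) =
      inv_num a + 1 + 2 * card {r. i < r \<and> r < j \<and> a ! i < a ! r \<and> a ! r < a ! j}"
proof -
  have len: "length a = n"
    using assms(1) by (rule is_perm_length)
  have "inj_on ((!) a) {..<n}"
    using is_perm_distinct[OF assms(1)] len by (simp add: inj_on_def nth_eq_iff_index_eq)
  moreover have "(!) (swap_pos a i j) = (!) a \<circ> transpose i j"
    using assms(2,3) len by (auto simp: nth_swap_pos_transpose)
  ultimately show ?thesis
    unfolding inv_num_eq_card_inversions_on length_swap_pos len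
    using card_inversions_on_transpose[OF assms(2,3) _ assms(4)] by simp
qed

definition covering_swap :: "nat list \<Rightarrow> nat \<Rightarrow> nat \<Rightarrow> bool" where
  "covering_swap a i j \<longleftrightarrow>
     a ! i < a ! j \<and> (\<forall>p. i < p \<and> p < j \<longrightarrow> \<not> (a ! i < a ! p \<and> a ! p < a ! j))"

lemma inv_num_swap_pos_eq_Suc_iff:
  assumes "is_perm n a" "i < j" "j < n"
  shows "inv_num (swap_pos a i j) = inv_num a + 1 \<longleftrightarrow> covering_swap a i j"
proof (cases "a ! i < a ! j")
  case True
  have "finite {r. i < r \<and> r < j \<and> a ! i < a ! r \<and> a ! r < a ! j}"
    by (rule finite_subset[of _ "{..<j}"]) auto
  then show ?thesis
    unfolding inv_num_swap_pos[OF assms True] covering_swap_def using True by auto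
next
  case False
  let ?b = "swap_pos a i j"
  have len: "length a = n"
    using assms(1) by (rule is_perm_length)
  have "a ! i \<noteq> a ! j"
    using is_perm_nth_eq_iff[OF assms(1)] assms by simp
  then have "?b ! i < ?b ! j"
    using False assms len by (simp add: nth_swap_pos)
  then have "inv_num ?b < inv_num (swap_pos ?b i j)"
    using inv_num_swap_pos[OF is_perm_swap_pos[OF assms(1)] assms(2,3)] assms len by simp
  then have "inv_num ?b < inv_num a"
    using swap_pos_swap_pos assms len by simp
  then show ?thesis
    using False by (auto simp: covering_swap_def)
qed

lemma kcovers_iff_covering_swap:
  "kcovers n k u w \<longleftrightarrow>
     is_perm n u \<and> (\<exists>i j. i < k \<and> k \<le> j \<and> j < n \<and> w = swap_pos u i j \<and> covering_swap u i j)"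
  unfolding kcovers_def by (metis inv_num_swap_pos_eq_Suc_iff order_less_le_trans)

lemma kcoversI:
  "is_perm n u \<Longrightarrow> i < k \<Longrightarrow> k \<le> j \<Longrightarrow> j < n \<Longrightarrow> covering_swap u i j \<Longrightarrow> kcovers n k u (swap_pos u i j)"
  unfolding kcovers_iff_covering_swap by blast

lemma kcoversE:
  assumes "kcovers n k u w"
  obtains i j where "i < k" "k \<le> j" "j < n" "w = swap_pos u i j" "covering_swap u i j" "is_perm n u"
  using assms unfolding kcovers_iff_covering_swap by blast

lemma kcovers_1E:
  assumes "kcovers n 1 u w"
  obtains m where "0 < m" "m < n" "w = swap_pos u 0 m" "covering_swap u 0 m" "is_perm n u"
proof -
  obtain i m where "i < 1" "1 \<le> m" "m < n" "w = swap_pos u i m" "covering_swap u i m" "is_perm n u"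
    using assms by (rule kcoversE)
  then show thesis
    using that[of m] by simp
qed

lemma kcovers_imp_covers: "kcovers n k u w \<Longrightarrow> covers n u w"
  unfolding kcovers_def covers_def by (metis order_less_le_trans)

lemma kcovers_is_perm: "kcovers n k u w \<Longrightarrow> is_perm n w"
  by (erule kcoversE) (simp add: is_perm_swap_pos)

lemma exch_min_swap_pos:
  assumes "distinct u" "p < length u" "q < length u" "p \<noteq> q"
  shows "exch_min u (swap_pos u p q) = min (u ! p) (u ! q)"
proof -
  have "{u ! r | r. r < length u \<and> u ! r \<noteq> swap_pos u p q ! r} = {u ! p, u ! q}"
    using assms by (auto simp: nth_swap_pos nth_eq_iff_index_eq)
  then show ?thesis
    unfolding exch_min_def by (simp add: min_def)
qed

lemma exch_min_covering_swap:
  assumes "is_perm n a" "i < j" "j < n" "covering_swap a i j"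
  shows "exch_min a (swap_pos a i j) = a ! i"
  using exch_min_swap_pos[OF is_perm_distinct[OF assms(1)], of i j] assms
  by (simp add: is_perm_length covering_swap_def)

lemma exch_min_1_chain:
  assumes "kcovers n 1 x y" "kcovers n 1 y z"
  shows "exch_min x y < exch_min y z"
proof -
  obtain m where m: "0 < m" "m < n" "y = swap_pos x 0 m" "covering_swap x 0 m" "is_perm n x"
    using assms(1) by (rule kcovers_1E)
  obtain m' where m': "0 < m'" "m' < n" "z = swap_pos y 0 m'" "covering_swap y 0 m'" "is_perm n y"
    using assms(2) by (rule kcovers_1E)
  have "y ! 0 = x ! m"
    using m by (simp add: nth_swap_pos is_perm_length)
  then show ?thesis
    using exch_min_covering_swap[of n x 0 m] exch_min_covering_swap[of n y 0 m'] m m'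
    by (simp add: covering_swap_def)
qed

definition head_below_ascents :: "nat \<Rightarrow> nat \<Rightarrow> nat list \<Rightarrow> bool" where
  "head_below_ascents n k v \<longleftrightarrow> (\<forall>p q. k \<le> p \<and> p < q \<and> q < n \<and> v ! p < v ! q \<longrightarrow> v ! 0 < v ! p)"

lemma S_dec_head_below_ascents: "w \<in> S_dec n k \<Longrightarrow> head_below_ascents n k w"
  unfolding S_dec_def head_below_ascents_def by (auto dest: less_asym)

lemma head_below_ascents_covering_swap_0:
  assumes perm: "is_perm n v" and "0 < m" "m < n" "covering_swap v 0 m" "1 \<le> k"
    and head: "head_below_ascents n k (swap_pos v 0 m)"
  shows "head_below_ascents n k v"
  unfolding head_below_ascents_def
proof (intro allI impI)
  fix p q assume pq: "k \<le> p \<and> p < q \<and> q < n \<and> v ! p < v ! q"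
  have nth_w: "swap_pos v 0 m ! x = (if x = m then v ! 0 else if x = 0 then v ! m else v ! x)" for x
    using assms by (simp add: nth_swap_pos is_perm_length)
  have v0m: "v ! 0 < v ! m"
    using assms by (simp add: covering_swap_def)
  show "v ! 0 < v ! p"
  proof (rule ccontr)
    assume "\<not> v ! 0 < v ! p"
    moreover have "v ! p \<noteq> v ! 0"
      using is_perm_nth_eq_iff[OF perm, of p 0] pq assms by auto
    ultimately have "v ! p < v ! 0"
      by simp
    then have "swap_pos v 0 m ! p < swap_pos v 0 m ! q"
      using pq assms v0m by (auto simp: nth_w)
    then have "swap_pos v 0 m ! 0 < swap_pos v 0 m ! p"
      using head pq unfolding head_below_ascents_def by blast
    then show False
      using \<open>v ! p < v ! 0\<close> v0m pq assms by (auto simp: nth_w split: if_splits)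
  qed
qed

lemma head_below_ascents_1_path:
  assumes "1 \<le> k" "\<And>r. r < N \<Longrightarrow> kcovers n 1 (f r) (f (Suc r))"
    and "head_below_ascents n k (f N)" "r \<le> N"
  shows "head_below_ascents n k (f r)"
  using assms(4)
proof (induction rule: inc_induct)
  case (step r)
  obtain m where "0 < m" "m < n" "f (Suc r) = swap_pos (f r) 0 m" "covering_swap (f r) 0 m"
    "is_perm n (f r)"
    using assms(2)[OF step.hyps(2)] by (rule kcovers_1E)
  then show ?case
    using head_below_ascents_covering_swap_0[OF _ _ _ _ assms(1)] step.IH by metis
qed (use assms(3) in simp)

section \<open>The growth diagram as a grid of squares\<close>

definition swapped_middle :: "nat \<Rightarrow> nat \<Rightarrow> nat \<Rightarrow> nat list \<Rightarrow> nat list \<Rightarrow> nat list \<Rightarrow> nat list \<Rightarrow> bool" where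
  "swapped_middle n k1 k2 a b c b' \<longleftrightarrow>
     b' \<noteq> b \<and> covers n a b' \<and> covers n b' c \<and> kcovers n k2 a b' \<and> kcovers n k1 b' c"

definition growth_cell :: "nat \<Rightarrow> nat \<Rightarrow> nat \<Rightarrow> nat list \<Rightarrow> nat list \<Rightarrow> nat list \<Rightarrow> nat list \<Rightarrow> bool" where
  "growth_cell n k1 k2 a b c h \<longleftrightarrow> kcovers n k1 a b \<and> kcovers n k2 b c \<and>
     (swapped_middle n k1 k2 a b c h \<or> (\<nexists>b'. swapped_middle n k1 k2 a b c b') \<and> h = b)"

definition growth_square :: "nat \<Rightarrow> nat \<Rightarrow> nat \<Rightarrow> (nat \<Rightarrow> nat \<Rightarrow> nat list) \<Rightarrow> nat \<Rightarrow> nat \<Rightarrow> bool" where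
  "growth_square n k1 k2 G r s \<longleftrightarrow>
     growth_cell n k1 k2 (G r s) (G (Suc r) s) (G (Suc r) (Suc s)) (G r (Suc s))"

lemma local_moveE:
  assumes "local_move n k1 k2 (vs, ts) (vs', ts')"
  obtains p h where "Suc p < length ts" "length vs = length ts + 1" "ts ! p = L1" "ts ! Suc p = L2"
    "ts' = ts[p := L2, Suc p := L1]" "vs' = vs[Suc p := h]"
    "growth_cell n k1 k2 (vs ! p) (vs ! Suc p) (vs ! Suc (Suc p)) h"
proof -
  from assms obtain p where
    p: "Suc p < length ts" "length vs = length ts + 1" "ts ! p = L1" "ts ! Suc p = L2"
      "ts' = ts[p := L2, Suc p := L1]"
    and steps: "kcovers n k1 (vs ! p) (vs ! Suc p)" "kcovers n k2 (vs ! Suc p) (vs ! Suc (Suc p))"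
    and move: "(\<exists>b'. swapped_middle n k1 k2 (vs ! p) (vs ! Suc p) (vs ! Suc (Suc p)) b'
        \<and> vs' = vs[Suc p := b'])
      \<or> (\<nexists>b'. swapped_middle n k1 k2 (vs ! p) (vs ! Suc p) (vs ! Suc (Suc p)) b') \<and> vs' = vs"
    unfolding local_move_def Let_def swapped_middle_def by (simp add: numeral_2_eq_2) blast
  from move show thesis
  proof
    assume "\<exists>b'. swapped_middle n k1 k2 (vs ! p) (vs ! Suc p) (vs ! Suc (Suc p)) b'
      \<and> vs' = vs[Suc p := b']"
    then obtain b' where
      "swapped_middle n k1 k2 (vs ! p) (vs ! Suc p) (vs ! Suc (Suc p)) b'" "vs' = vs[Suc p := b']"
      by blast
    then show thesis
      using that[of p b'] p steps by (simp add: growth_cell_def)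
  next
    assume "(\<nexists>b'. swapped_middle n k1 k2 (vs ! p) (vs ! Suc p) (vs ! Suc (Suc p)) b') \<and> vs' = vs"
    then show thesis
      using that[of p "vs ! Suc p"] p steps by (simp add: growth_cell_def)
  qed
qed

text \<open>A labelled chain is read as a lattice path in the growth diagram: after t steps it
  has made count_L1 ts t steps in the k1-direction and the rest in the k2-direction.\<close>

definition count_L1 :: "lab list \<Rightarrow> nat \<Rightarrow> nat" where
  "count_L1 ts t = length (filter (\<lambda>l. l = L1) (take t ts))"

lemma count_L1_0 [simp]: "count_L1 ts 0 = 0"
  by (simp add: count_L1_def)

lemma count_L1_Suc: "count_L1 ts (Suc t) = count_L1 ts t + of_bool (t < length ts \<and> ts ! t = L1)"
  unfolding count_L1_def by (cases "t < length ts") (auto simp: take_Suc_conv_app_nth)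

lemma count_L1_mono: "t \<le> t' \<Longrightarrow> count_L1 ts t \<le> count_L1 ts t'"
  by (induction t' rule: dec_induct) (auto simp: count_L1_Suc)

lemma count_L1_le: "count_L1 ts t \<le> t"
  by (induction t) (auto simp: count_L1_Suc)

lemma count_L2_mono: "t \<le> t' \<Longrightarrow> t - count_L1 ts t \<le> t' - count_L1 ts t'"
proof (induction t' rule: dec_induct)
  case (step m)
  then show ?case
    using count_L1_le[of ts m] by (auto simp: count_L1_Suc)
qed simp

lemma count_L1_replicate_L1_L2: "count_L1 (replicate a L1 @ replicate b L2) t = min t a"
  unfolding count_L1_def by (simp add: take_append min_def)

lemma count_L1_replicate_L2_L1: "count_L1 (replicate b L2 @ replicate a L1) t = min (t - b) a"
  unfolding count_L1_def by (simp add: take_append min_def)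

lemma count_L1_corner:
  assumes "Suc p < length ts" "ts ! p = L1" "ts ! Suc p = L2"
  shows "count_L1 ts (Suc p) = Suc (count_L1 ts p)"
    and "count_L1 ts (Suc (Suc p)) = Suc (count_L1 ts p)"
    and "count_L1 ts t \<le> count_L1 ts p \<Longrightarrow> t - count_L1 ts t \<le> p - count_L1 ts p"
    and "count_L1 (ts[p := L2, Suc p := L1]) (Suc p) = count_L1 ts p"
    and "t \<noteq> Suc p \<Longrightarrow> count_L1 (ts[p := L2, Suc p := L1]) t = count_L1 ts t"
proof -
  let ?ts = "ts[p := L2, Suc p := L1]"
  show Suc_p: "count_L1 ts (Suc p) = Suc (count_L1 ts p)"
    using assms by (simp add: count_L1_Suc)
  then show "count_L1 ts (Suc (Suc p)) = Suc (count_L1 ts p)"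
    using assms by (simp add: count_L1_Suc)
  show "t - count_L1 ts t \<le> p - count_L1 ts p" if "count_L1 ts t \<le> count_L1 ts p"
  proof -
    have "t \<le> p"
      using that count_L1_mono[of "Suc p" t ts] Suc_p by (cases "t \<le> p") auto
    then show ?thesis
      by (rule count_L2_mono)
  qed
  have before: "count_L1 ?ts t = count_L1 ts t" if "t \<le> p" for t
    using that by (induction t) (use assms in \<open>simp_all add: count_L1_Suc nth_list_update\<close>)
  show at: "count_L1 ?ts (Suc p) = count_L1 ts p"
    using before[of p] assms by (simp add: count_L1_Suc nth_list_update)
  have after: "count_L1 ?ts t = count_L1 ts t" if "Suc (Suc p) \<le> t" for t
    using that
  proof (induction t rule: dec_induct)
    case base
    then show ?case
      using at Suc_p assms by (simp add: count_L1_Suc nth_list_update)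
  qed (use assms in \<open>simp add: count_L1_Suc nth_list_update\<close>)
  show "t \<noteq> Suc p \<Longrightarrow> count_L1 ?ts t = count_L1 ts t"
    using before after by (cases "t \<le> p") auto
qed

definition below_path :: "lab list \<Rightarrow> nat \<Rightarrow> nat \<Rightarrow> bool" where
  "below_path ts r s \<longleftrightarrow> (\<exists>t\<le>length ts. count_L1 ts t = r \<and> s < t - count_L1 ts t)"

lemma below_path_after_corner:
  assumes "Suc p < length ts" "ts ! p = L1" "ts ! Suc p = L2"
    and "below_path (ts[p := L2, Suc p := L1]) r0 s0"
  shows "below_path ts r0 s0 \<or> (r0 = count_L1 ts p \<and> s0 = p - count_L1 ts p)"
proof -
  let ?ts = "ts[p := L2, Suc p := L1]"
  obtain t where t: "t \<le> length ts" "count_L1 ?ts t = r0" "s0 < t - count_L1 ?ts t"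
    using assms(4) by (auto simp: below_path_def)
  note corner = count_L1_corner[OF assms(1-3)]
  show ?thesis
  proof (cases "t = Suc p")
    case True
    then have r0: "r0 = count_L1 ts p" and "s0 \<le> p - count_L1 ts p"
      using t corner(4) count_L1_le[of ts p] by auto
    show ?thesis
    proof (cases "s0 = p - count_L1 ts p")
      case False
      then have "p \<le> length ts \<and> count_L1 ts p = r0 \<and> s0 < p - count_L1 ts p"
        using r0 \<open>s0 \<le> p - count_L1 ts p\<close> assms(1) by simp
      then show ?thesis
        unfolding below_path_def by blast
    qed (use r0 in simp)
  next
    case False
    then show ?thesis
      using t corner(5) by (auto simp: below_path_def)
  qed
qed

text \<open>The invariant of the growth diagram: a grid G with the input chains on its bottom row
  and right column, the current chain along the lattice path, and every square below the
  path already filled by a local move.\<close>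

definition growth_invariant :: "nat \<Rightarrow> nat \<Rightarrow> nat \<Rightarrow> nat \<Rightarrow> nat \<Rightarrow> nat list list \<Rightarrow> nat list list
    \<Rightarrow> nat list list \<Rightarrow> lab list \<Rightarrow> bool" where
  "growth_invariant n k1 k2 N1 N2 C1 C2 vs ts \<longleftrightarrow>
     length vs = length ts + 1 \<and> length ts = N1 + N2 \<and> count_L1 ts (length ts) = N1 \<and>
     (\<exists>G. (\<forall>r\<le>N1. G r 0 = C1 ! r) \<and> (\<forall>s\<le>N2. G N1 s = C2 ! s) \<and>
          (\<forall>t\<le>length ts. vs ! t = G (count_L1 ts t) (t - count_L1 ts t)) \<and>
          (\<forall>r s. r < N1 \<longrightarrow> s < N2 \<longrightarrow> below_path ts r s \<longrightarrow> growth_square n k1 k2 G r s))"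

lemma growth_invariant_init:
  assumes "C1 \<noteq> []" "C2 \<noteq> []" "last C1 = hd C2"
  shows "growth_invariant n k1 k2 (length C1 - 1) (length C2 - 1) C1 C2
           (C1 @ tl C2) (replicate (length C1 - 1) L1 @ replicate (length C2 - 1) L2)"
proof -
  define N1 where "N1 = length C1 - 1"
  define N2 where "N2 = length C2 - 1"
  have len: "length C1 = Suc N1" "length C2 = Suc N2"
    using assms unfolding N1_def N2_def by auto
  define G where "G r s = (if s = 0 then C1 ! r else C2 ! s)" for r s
  let ?ts = "replicate N1 L1 @ replicate N2 L2"
  have count: "count_L1 ?ts t = min t N1" for t
    by (rule count_L1_replicate_L1_L2)
  have "C1 ! N1 = C2 ! 0"
    using assms len by (simp add: last_conv_nth hd_conv_nth)
  then have right: "\<forall>s\<le>N2. G N1 s = C2 ! s"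
    by (simp add: G_def)
  have path: "\<forall>t\<le>length ?ts. (C1 @ tl C2) ! t = G (count_L1 ?ts t) (t - count_L1 ?ts t)"
  proof (intro allI impI)
    fix t assume t: "t \<le> length ?ts"
    show "(C1 @ tl C2) ! t = G (count_L1 ?ts t) (t - count_L1 ?ts t)"
    proof (cases "t \<le> N1")
      case False
      then have "(C1 @ tl C2) ! t = C2 ! (t - N1)"
        using t len by (simp add: nth_append nth_tl Suc_diff_Suc)
      then show ?thesis
        using False by (simp add: count G_def)
    qed (use len in \<open>simp add: count G_def nth_append\<close>)
  qed
  show ?thesis
    unfolding N1_def[symmetric] N2_def[symmetric] growth_invariant_def
    using len right path by (intro conjI exI[of _ G]) (auto simp: count G_def below_path_def)
qed

lemma growth_invariant_step:
  assumes inv: "growth_invariant n k1 k2 N1 N2 C1 C2 vs ts"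
    and move: "local_move n k1 k2 (vs, ts) (vs', ts')"
  shows "growth_invariant n k1 k2 N1 N2 C1 C2 vs' ts'"
proof -
  obtain p h where p: "Suc p < length ts" "length vs = length ts + 1" "ts ! p = L1" "ts ! Suc p = L2"
      and ts': "ts' = ts[p := L2, Suc p := L1]" and vs': "vs' = vs[Suc p := h]"
      and cell: "growth_cell n k1 k2 (vs ! p) (vs ! Suc p) (vs ! Suc (Suc p)) h"
    using move by (rule local_moveE)
  have len: "length vs = length ts + 1" "length ts = N1 + N2" "count_L1 ts (length ts) = N1"
    using inv by (auto simp: growth_invariant_def)
  obtain G where bottom: "\<forall>r\<le>N1. G r 0 = C1 ! r" and right: "\<forall>s\<le>N2. G N1 s = C2 ! s"
    and path: "\<forall>t\<le>length ts. vs ! t = G (count_L1 ts t) (t - count_L1 ts t)"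
    and below: "\<forall>r s. r < N1 \<longrightarrow> s < N2 \<longrightarrow> below_path ts r s \<longrightarrow> growth_square n k1 k2 G r s"
    using inv unfolding growth_invariant_def by blast
  define r where "r = count_L1 ts p"
  define s where "s = p - r"
  note corner = count_L1_corner[OF p(1,3,4), folded r_def s_def ts']
  have "r \<le> p"
    unfolding r_def by (rule count_L1_le)
  have "r < N1"
    using count_L1_mono[of "Suc p" "length ts" ts] p(1) corner(1) len(3) by simp
  have corner_vs: "vs ! p = G r s" "vs ! Suc p = G (Suc r) s" "vs ! Suc (Suc p) = G (Suc r) (Suc s)"
    using path p(1) corner(1,2) \<open>r \<le> p\<close> unfolding s_def r_def by (auto simp: Suc_diff_le)
  define G' where "G' = G(r := (G r)(Suc s := h))"
  have G'_other: "G' x y = G x y" if "x \<noteq> r \<or> y \<noteq> Suc s" for x y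
    using that unfolding G'_def by auto
  have G'_corner: "G' r (Suc s) = h"
    unfolding G'_def by simp
  have path': "vs' ! t = G' (count_L1 ts' t) (t - count_L1 ts' t)" if "t \<le> length ts'" for t
  proof (cases "t = Suc p")
    case True
    then show ?thesis
      using p vs' corner(4) G'_corner \<open>r \<le> p\<close> unfolding s_def by (simp add: Suc_diff_le)
  next
    case False
    have "count_L1 ts t \<noteq> r \<or> t - count_L1 ts t \<noteq> Suc s"
      using corner(3)[of t] by auto
    then show ?thesis
      using False that path vs' ts' corner(5)[OF False] G'_other by auto
  qed
  have below': "growth_square n k1 k2 G' r0 s0"
    if "r0 < N1" "s0 < N2" "below_path ts' r0 s0" for r0 s0
  proof (cases "r0 = r \<and> s0 = s")
    case True
    then show ?thesis
      unfolding growth_square_def using cell corner_vs G'_other G'_corner by auto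
  next
    case False
    then have "below_path ts r0 s0"
      using below_path_after_corner[OF p(1,3,4) that(3)[unfolded ts'], folded r_def s_def] by blast
    moreover from this obtain t where "count_L1 ts t = r0" "s0 < t - count_L1 ts t"
      unfolding below_path_def by blast
    then have "r < r0 \<or> s0 < s"
      using corner(3)[of t] by (cases "r0 \<le> r") auto
    ultimately show ?thesis
      using below that(1,2) G'_other unfolding growth_square_def by auto
  qed
  show ?thesis
    unfolding growth_invariant_def
  proof (intro conjI exI[of _ G'])
    show "length vs' = length ts' + 1" "length ts' = N1 + N2" "count_L1 ts' (length ts') = N1"
      using len vs' ts' corner(5)[of "length ts"] p(1) by auto
    show "\<forall>r\<le>N1. G' r 0 = C1 ! r" "\<forall>s\<le>N2. G' N1 s = C2 ! s"
      using bottom right G'_other \<open>r < N1\<close> by auto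
  qed (use path' below' in blast)+
qed

lemma growth_invariant_rtranclp:
  assumes "(local_move n k1 k2)\<^sup>*\<^sup>* (vs, ts) (vs', ts')" "growth_invariant n k1 k2 N1 N2 C1 C2 vs ts"
  shows "growth_invariant n k1 k2 N1 N2 C1 C2 vs' ts'"
  using assms by (induction rule: rtranclp_induct2) (auto intro: growth_invariant_step)

lemma growth_invariant_final:
  assumes "growth_invariant n k1 k2 N1 N2 C1 C2 vs (replicate N2 L2 @ replicate N1 L1)"
  obtains G where "\<forall>r\<le>N1. G r 0 = C1 ! r" "\<forall>s\<le>N2. G N1 s = C2 ! s"
    "\<forall>r<N1. \<forall>s<N2. growth_square n k1 k2 G r s"
    "length vs = N1 + N2 + 1" "\<forall>s\<le>N2. vs ! s = G 0 s" "\<forall>r\<le>N1. vs ! (N2 + r) = G r N2"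
proof -
  let ?ts = "replicate N2 L2 @ replicate N1 L1"
  have count: "count_L1 ?ts t = min (t - N2) N1" for t
    by (rule count_L1_replicate_L2_L1)
  obtain G where "\<forall>r\<le>N1. G r 0 = C1 ! r" "\<forall>s\<le>N2. G N1 s = C2 ! s"
    and path: "\<forall>t\<le>length ?ts. vs ! t = G (count_L1 ?ts t) (t - count_L1 ?ts t)"
    and below: "\<forall>r s. r < N1 \<longrightarrow> s < N2 \<longrightarrow> below_path ?ts r s \<longrightarrow> growth_square n k1 k2 G r s"
    and "length vs = length ?ts + 1"
    using assms unfolding growth_invariant_def by blast
  moreover have "growth_square n k1 k2 G r s" if "r < N1" "s < N2" for r s
  proof -
    have "below_path ?ts r s"
      unfolding below_path_def using that by (intro exI[of _ "N2 + r"]) (simp add: count)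
    then show ?thesis
      using below that by blast
  qed
  ultimately show thesis
    using that path by (simp add: count)
qed

theorem growth_output_grid:
  assumes "growth_output n k1 k2 C1 C2 C2' C1'" "C1 \<noteq> []" "C2 \<noteq> []" "last C1 = hd C2"
  defines "N1 \<equiv> length C1 - 1" and "N2 \<equiv> length C2 - 1"
  obtains G where "\<forall>r\<le>N1. C1 ! r = G r 0" "\<forall>s\<le>N2. C2 ! s = G N1 s"
    "\<forall>r<N1. \<forall>s<N2. growth_square n k1 k2 G r s"
    "length C1' = Suc N1" "\<forall>r\<le>N1. C1' ! r = G r N2"
    "length C2' = Suc N2" "\<forall>s\<le>N2. C2' ! s = G 0 s"
proof -
  obtain vs where moves: "(local_move n k1 k2)\<^sup>*\<^sup>* (C1 @ tl C2, replicate N1 L1 @ replicate N2 L2)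
      (vs, replicate N2 L2 @ replicate N1 L1)"
    and C2': "C2' = take (Suc N2) vs" and C1': "C1' = drop N2 vs"
    using assms(1,3) unfolding growth_output_def N1_def N2_def by auto
  have "growth_invariant n k1 k2 N1 N2 C1 C2 vs (replicate N2 L2 @ replicate N1 L1)"
    using growth_invariant_rtranclp[OF moves growth_invariant_init[OF assms(2-4), folded N1_def N2_def]]
    .
  then obtain G where "\<forall>r\<le>N1. G r 0 = C1 ! r" "\<forall>s\<le>N2. G N1 s = C2 ! s"
      "\<forall>r<N1. \<forall>s<N2. growth_square n k1 k2 G r s"
      and vs: "length vs = N1 + N2 + 1" "\<forall>s\<le>N2. vs ! s = G 0 s" "\<forall>r\<le>N1. vs ! (N2 + r) = G r N2"
    by (rule growth_invariant_final)
  then show thesis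
    using that[of G] C1' C2' by simp
qed

section \<open>A single square for the labels k and 1\<close>

text \<open>The ways of writing t_{i j} t_{0 m} as t_{0 m'} t_{i' j'} with i' < k <= j' (positions
  0-based, so that 0 is the paper's position 1).\<close>

locale transpose_products_eq =
  fixes n k i j m m' i' j' :: nat
  assumes eq: "\<And>p. p < n \<Longrightarrow> transpose i j (transpose 0 m p) = transpose 0 m' (transpose i' j' p)"
    and bounds: "i < k" "k \<le> j" "j < n" "0 < m" "m < n" "0 < m'" "m' < n" "i' < k" "k \<le> j'" "j' < n"
begin

lemma transpose_0_eq_0_iff: "y \<noteq> 0 \<Longrightarrow> transpose 0 y x = 0 \<longleftrightarrow> x = y"
  by (auto simp: transpose_def)

lemma first_moved:
  assumes "i = 0" "m \<noteq> j" "m' \<noteq> j"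
  shows "m < k \<and> m' = m \<and> i' = m \<and> j' = j"
proof -
  have "transpose 0 m' (transpose i' j' j) = 0"
    using eq[of j] bounds assms by (simp add: transpose_def)
  then have "transpose i' j' j = m'"
    using transpose_0_eq_0_iff bounds by auto
  then have "j' = j" "m' = i'"
    using assms bounds by (auto simp: transpose_def split: if_splits)
  moreover have "transpose 0 m' (transpose i' j' 0) = m"
    using eq[of 0] bounds assms by (simp add: transpose_def)
  ultimately show ?thesis
    using assms bounds by (auto simp: transpose_def split: if_splits)
qed

lemma m_eq_i:
  assumes "0 < i" "m = i"
  shows "(m' = i \<and> i' = 0 \<and> j' = j) \<or> (m' = j \<and> i' = i \<and> j' = j)"
proof -
  have "transpose 0 m' (transpose i' j' i) = 0"
    using eq[of i] bounds assms by (simp add: transpose_def)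
  then have at_i: "transpose i' j' i = m'"
    using transpose_0_eq_0_iff bounds by auto
  show ?thesis
  proof (cases "i = i'")
    case True
    moreover have "transpose 0 m' (transpose i' j' 0) = j"
      using eq[of 0] bounds assms by (simp add: transpose_def)
    ultimately show ?thesis
      using at_i assms bounds by (auto simp: transpose_def)
  next
    case False
    then have "m' = i"
      using at_i bounds by (auto simp: transpose_def)
    moreover have "transpose 0 m' (transpose i' j' j) = i"
      using eq[of j] bounds assms by (simp add: transpose_def)
    ultimately show ?thesis
      using assms bounds by (auto simp: transpose_def split: if_splits)
  qed
qed

lemma m_eq_j:
  assumes "0 < i" "m = j"
  shows "m' = i \<and> i' = i \<and> j' = j"
proof -
  have "transpose 0 m' (transpose i' j' j) = 0"
    using eq[of j] bounds assms by (simp add: transpose_def)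
  then have at_j: "transpose i' j' j = m'"
    using transpose_0_eq_0_iff bounds by auto
  show ?thesis
  proof (cases "j = j'")
    case True
    moreover have "transpose 0 m' (transpose i' j' 0) = i"
      using eq[of 0] bounds assms by (simp add: transpose_def)
    ultimately show ?thesis
      using at_j assms bounds by (auto simp: transpose_def split: if_splits)
  next
    case False
    then have "m' = j"
      using at_j bounds by (auto simp: transpose_def)
    moreover have "transpose 0 m' (transpose i' j' i) = j"
      using eq[of i] bounds assms by (simp add: transpose_def)
    ultimately show ?thesis
      using assms bounds by (auto simp: transpose_def split: if_splits)
  qed
qed

lemma apart:
  assumes "0 < i" "m \<noteq> i" "m \<noteq> j"
  shows "m' = m \<and> i' = i \<and> j' = j"
proof -
  have "transpose 0 m' (transpose i' j' m) = 0"
    using eq[of m] bounds assms by (simp add: transpose_def)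
  then have at_m: "transpose i' j' m = m'"
    using transpose_0_eq_0_iff bounds by auto
  moreover have "transpose 0 m' (transpose i' j' 0) = m"
    using eq[of 0] bounds assms by (simp add: transpose_def)
  ultimately have "m \<noteq> i' \<and> m \<noteq> j'"
    using bounds assms by (auto simp: transpose_def split: if_splits)
  then have "m' = m"
    using at_m by (simp add: transpose_def)
  moreover have "transpose 0 m' (transpose i' j' i) = j"
    using eq[of i] bounds assms by (simp add: transpose_def)
  ultimately show ?thesis
    using assms bounds by (auto simp: transpose_def split: if_splits)
qed

end

text \<open>The output 1-step
  of the local move swaps positions 0 and cell_out_pos, and cell_out_exch is the smaller value
  exchanged by the output k-step.\<close>

definition cell_out_pos :: "nat \<Rightarrow> nat list \<Rightarrow> nat \<Rightarrow> nat \<Rightarrow> nat \<Rightarrow> nat" where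
  "cell_out_pos k a i j m =
     (if i = 0 then (if k \<le> m then j else m)
      else if m = i then (if a ! 0 < a ! i then i else j)
      else if m = j then i else m)"

definition cell_out_exch :: "nat \<Rightarrow> nat list \<Rightarrow> nat \<Rightarrow> nat \<Rightarrow> nat \<Rightarrow> nat" where
  "cell_out_exch k a i j m = (if i = 0 \<and> k \<le> m then a ! j else if 0 < i \<and> m = j then a ! 0 else a ! i)"

locale k1_square =
  fixes n k :: nat and a :: "nat list" and i j m :: nat
  assumes perm: "is_perm n a" and k_pos: "1 \<le> k"
    and i_less_k: "i < k" and k_le_j: "k \<le> j" and j_less_n: "j < n" and cover_ij: "covering_swap a i j"
    and m_pos: "0 < m" and m_less_n: "m < n" and cover_0m: "covering_swap (swap_pos a i j) 0 m"
begin

abbreviation mid where "mid \<equiv> swap_pos a i j"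
abbreviation upper where "upper \<equiv> swap_pos mid 0 m"
abbreviation out_pos where "out_pos \<equiv> cell_out_pos k a i j m"
abbreviation out where "out \<equiv> swap_pos a 0 out_pos"

lemma j_pos: "0 < j"
  using k_pos k_le_j by simp

lemmas bounds = k_pos i_less_k k_le_j j_less_n m_pos m_less_n j_pos

lemma length_a: "length a = n"
  using perm by (rule is_perm_length)

lemma nth_a_eq_iff: "p < n \<Longrightarrow> q < n \<Longrightarrow> a ! p = a ! q \<longleftrightarrow> p = q"
  using perm by (rule is_perm_nth_eq_iff)

lemma nth_mid: "mid ! p = (if p = j then a ! i else if p = i then a ! j else a ! p)"
  using length_a bounds by (simp add: nth_swap_pos)

lemma nth_upper: "upper ! p = (if p = m then mid ! 0 else if p = 0 then mid ! m else mid ! p)"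
  using length_a bounds by (simp add: nth_swap_pos)

lemma nth_swap_0:
  "q < n \<Longrightarrow> swap_pos a 0 q ! p = (if p = q then a ! 0 else if p = 0 then a ! q else a ! p)"
  using length_a bounds by (simp add: nth_swap_pos)

lemma a_i_less_a_j: "a ! i < a ! j"
  using cover_ij by (simp add: covering_swap_def)

lemma between_ij: "i < p \<Longrightarrow> p < j \<Longrightarrow> \<not> (a ! i < a ! p \<and> a ! p < a ! j)"
  using cover_ij by (simp add: covering_swap_def)

lemma mid_0_less_m: "mid ! 0 < mid ! m"
  using cover_0m by (simp add: covering_swap_def)

lemma between_0m: "0 < p \<Longrightarrow> p < m \<Longrightarrow> \<not> (mid ! 0 < mid ! p \<and> mid ! p < mid ! m)"
  using cover_0m by (simp add: covering_swap_def)

lemmas nth_upper_a = nth_upper[unfolded nth_mid]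
  and mid_0_less_m_a = mid_0_less_m[unfolded nth_mid]
  and between_0m_a = between_0m[unfolded nth_mid]

lemma m_ne_j_if_i_0: "i = 0 \<Longrightarrow> m \<noteq> j"
  using mid_0_less_m_a a_i_less_a_j bounds by auto

lemma square_cases:
  obtains (first_far) "i = 0" "k \<le> m"
    | (first_near) "i = 0" "m < k"
    | (at_i_up) "0 < i" "m = i" "a ! 0 < a ! i"
    | (at_i_down) "0 < i" "m = i" "a ! i < a ! 0"
    | (at_j) "0 < i" "m = j"
    | (apart) "0 < i" "m \<noteq> i" "m \<noteq> j"
proof -
  have "0 < i \<Longrightarrow> a ! 0 \<noteq> a ! i"
    using nth_a_eq_iff[of 0 i] bounds by auto
  then show thesis
    using that
    by (cases "i = 0"; cases "k \<le> m"; cases "m = i"; cases "m = j") (auto simp: nat_neq_iff)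
qed

lemma first_near_factorization:
  assumes "i = 0" "m < k"
  shows "covering_swap a 0 m" "covering_swap (swap_pos a 0 m) m j"
        "upper = swap_pos (swap_pos a 0 m) m j"
proof -
  let ?h = "swap_pos a 0 m"
  show "covering_swap a 0 m"
    unfolding covering_swap_def
  proof (intro conjI allI impI)
    show "a ! 0 < a ! m"
      using mid_0_less_m_a a_i_less_a_j assms bounds by auto
    fix p assume "0 < p \<and> p < m"
    then show "\<not> (a ! 0 < a ! p \<and> a ! p < a ! m)"
      using between_0m_a[of p] between_ij[of p] assms bounds nth_a_eq_iff[of p j] by auto
  qed
  show "covering_swap ?h m j"
    unfolding covering_swap_def using a_i_less_a_j between_ij assms bounds
    by (auto simp: nth_swap_0)
  show "upper = swap_pos ?h m j"
    by (rule nth_equalityI)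
      (use length_a bounds assms nth_upper_a in \<open>auto simp: nth_swap_pos nth_swap_0\<close>)
qed

lemma at_i_up_factorization:
  assumes "0 < i" "m = i" "a ! 0 < a ! i"
  shows "covering_swap a 0 i" "covering_swap (swap_pos a 0 i) 0 j"
        "upper = swap_pos (swap_pos a 0 i) 0 j"
proof -
  let ?h = "swap_pos a 0 i"
  show "covering_swap a 0 i"
    unfolding covering_swap_def
  proof (intro conjI allI impI)
    show "a ! 0 < a ! i"
      using assms by simp
    fix p assume "0 < p \<and> p < i"
    then show "\<not> (a ! 0 < a ! p \<and> a ! p < a ! i)"
      using between_0m_a[of p] assms bounds a_i_less_a_j by auto
  qed
  show "covering_swap ?h 0 j"
    unfolding covering_swap_def
  proof (intro conjI allI impI)
    show "?h ! 0 < ?h ! j"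
      using assms bounds a_i_less_a_j by (auto simp: nth_swap_0)
    fix p assume p: "0 < p \<and> p < j"
    show "\<not> (?h ! 0 < ?h ! p \<and> ?h ! p < ?h ! j)"
      using between_0m_a[of p] between_ij[of p] p assms bounds a_i_less_a_j
      by (cases "p < i"; cases "i < p") (auto simp: nth_swap_0)
  qed
  show "upper = swap_pos ?h 0 j"
    by (rule nth_equalityI)
      (use length_a bounds assms nth_upper_a in \<open>auto simp: nth_swap_pos nth_swap_0\<close>)
qed

lemma at_i_down_factorization:
  assumes "0 < i" "m = i" "a ! i < a ! 0"
  shows "covering_swap a 0 j" "covering_swap (swap_pos a 0 j) i j"
        "upper = swap_pos (swap_pos a 0 j) i j"
proof -
  let ?h = "swap_pos a 0 j"
  show "covering_swap a 0 j"
    unfolding covering_swap_def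
  proof (intro conjI allI impI)
    show "a ! 0 < a ! j"
      using assms mid_0_less_m_a bounds by auto
    fix p assume p: "0 < p \<and> p < j"
    show "\<not> (a ! 0 < a ! p \<and> a ! p < a ! j)"
      using between_0m_a[of p] between_ij[of p] p assms bounds a_i_less_a_j
      by (cases "p < i"; cases "i < p") auto
  qed
  show "covering_swap ?h i j"
    unfolding covering_swap_def
  proof (intro conjI allI impI)
    show "?h ! i < ?h ! j"
      using assms bounds by (auto simp: nth_swap_0)
    fix p assume "i < p \<and> p < j"
    then show "\<not> (?h ! i < ?h ! p \<and> ?h ! p < ?h ! j)"
      using between_ij[of p] assms bounds a_i_less_a_j mid_0_less_m_a by (auto simp: nth_swap_0)
  qed
  show "upper = swap_pos ?h i j"
    by (rule nth_equalityI)
      (use length_a bounds assms nth_upper_a in \<open>auto simp: nth_swap_pos nth_swap_0\<close>)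
qed

lemma at_j_factorization:
  assumes "0 < i" "m = j"
  shows "covering_swap a 0 i" "covering_swap (swap_pos a 0 i) i j"
        "upper = swap_pos (swap_pos a 0 i) i j"
proof -
  let ?h = "swap_pos a 0 i"
  show "covering_swap a 0 i"
    unfolding covering_swap_def
  proof (intro conjI allI impI)
    show "a ! 0 < a ! i"
      using assms mid_0_less_m_a bounds by auto
    fix p assume "0 < p \<and> p < i"
    then show "\<not> (a ! 0 < a ! p \<and> a ! p < a ! i)"
      using between_0m_a[of p] assms bounds a_i_less_a_j by auto
  qed
  show "covering_swap ?h i j"
    unfolding covering_swap_def
  proof (intro conjI allI impI)
    show "?h ! i < ?h ! j"
      using assms bounds a_i_less_a_j mid_0_less_m_a by (auto simp: nth_swap_0)
    fix p assume "i < p \<and> p < j"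
    then show "\<not> (?h ! i < ?h ! p \<and> ?h ! p < ?h ! j)"
      using between_0m_a[of p] between_ij[of p] assms bounds a_i_less_a_j nth_a_eq_iff[of p i]
      by (auto simp: nth_swap_0)
  qed
  show "upper = swap_pos ?h i j"
    by (rule nth_equalityI)
      (use length_a bounds assms nth_upper_a in \<open>auto simp: nth_swap_pos nth_swap_0\<close>)
qed

lemma apart_factorization:
  assumes "0 < i" "m \<noteq> i" "m \<noteq> j"
  shows "covering_swap a 0 m" "covering_swap (swap_pos a 0 m) i j"
        "upper = swap_pos (swap_pos a 0 m) i j"
proof -
  let ?h = "swap_pos a 0 m"
  have a_0_m: "a ! 0 < a ! m"
    using mid_0_less_m_a assms bounds by auto
  show "covering_swap a 0 m"
    unfolding covering_swap_def
  proof (intro conjI allI impI)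
    fix p assume p: "0 < p \<and> p < m"
    show "\<not> (a ! 0 < a ! p \<and> a ! p < a ! m)"
    proof (cases "p = i")
      case True
      show ?thesis
      proof (cases "j < m")
        case True
        then show ?thesis
          using between_0m_a[of j] \<open>p = i\<close> p assms bounds by auto
      next
        case False
        then have "i < m" "m < j"
          using p \<open>p = i\<close> assms by auto
        then show ?thesis
          using between_ij[of m] between_0m_a[of i] \<open>p = i\<close> p assms bounds a_i_less_a_j
            nth_a_eq_iff[of m j]
          by auto
      qed
    next
      case False
      then show ?thesis
        using between_0m_a[of p] between_0m_a[of i] p assms bounds by (cases "p = j") auto
    qed
  qed (rule a_0_m)
  show "covering_swap ?h i j"
    unfolding covering_swap_def
  proof (intro conjI allI impI)
    show "?h ! i < ?h ! j"
      using assms bounds a_i_less_a_j by (auto simp: nth_swap_0)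
    fix p assume "i < p \<and> p < j"
    then show "\<not> (?h ! i < ?h ! p \<and> ?h ! p < ?h ! j)"
      using between_ij[of p] between_ij[of m] between_0m_a[of i] assms bounds a_0_m nth_a_eq_iff[of m j]
      by (cases "p = m") (auto simp: nth_swap_0)
  qed
  show "upper = swap_pos ?h i j"
    by (rule nth_equalityI)
      (use length_a bounds assms nth_upper_a in \<open>auto simp: nth_swap_pos nth_swap_0\<close>)
qed

lemma out_factorization:
  obtains i' j' where "0 < out_pos" "out_pos < n" "covering_swap a 0 out_pos"
    "i' < k" "k \<le> j'" "j' < n" "covering_swap out i' j'" "upper = swap_pos out i' j'"
    "out ! i' = cell_out_exch k a i j m"
proof (cases rule: square_cases)
  case first_far
  then show thesis
    using that[of 0 m] cover_ij cover_0m m_ne_j_if_i_0 bounds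
    by (simp add: cell_out_pos_def cell_out_exch_def nth_swap_0)
next
  case first_near
  then show thesis
    using that[of m j] first_near_factorization bounds
    by (simp add: cell_out_pos_def cell_out_exch_def nth_swap_0)
next
  case at_i_up
  then show thesis
    using that[of 0 j] at_i_up_factorization bounds
    by (simp add: cell_out_pos_def cell_out_exch_def nth_swap_0)
next
  case at_i_down
  then show thesis
    using that[of i j] at_i_down_factorization bounds
    by (simp add: cell_out_pos_def cell_out_exch_def nth_swap_0)
next
  case at_j
  then show thesis
    using that[of i j] at_j_factorization bounds
    by (simp add: cell_out_pos_def cell_out_exch_def nth_swap_0)
next
  case apart
  then show thesis
    using that[of i j] apart_factorization bounds
    by (simp add: cell_out_pos_def cell_out_exch_def nth_swap_0)
qed

lemma out_pos_less_n: "out_pos < n"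
proof -
  obtain i' j' where "0 < out_pos" "out_pos < n"
    by (rule out_factorization)
  then show ?thesis
    by simp
qed

lemma upper_head_belowD:
  "head_below_ascents n k upper \<Longrightarrow> k \<le> x \<Longrightarrow> x < y \<Longrightarrow> y < n \<Longrightarrow> upper ! x < upper ! y \<Longrightarrow>
    upper ! 0 < upper ! x"
  unfolding head_below_ascents_def by blast

lemmas upper_head_belowD_a = upper_head_belowD[unfolded nth_upper_a]

lemma head_below_at_i_up:
  assumes head: "head_below_ascents n k upper" and "0 < i" "m = i" "a ! 0 < a ! i"
  shows "head_below_ascents n k (swap_pos a 0 i)"
  unfolding head_below_ascents_def
proof (intro allI impI)
  fix p q assume "k \<le> p \<and> p < q \<and> q < n \<and> swap_pos a 0 i ! p < swap_pos a 0 i ! q"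
  then show "swap_pos a 0 i ! 0 < swap_pos a 0 i ! p"
    using upper_head_belowD_a[OF head, of p q] upper_head_belowD_a[OF head, of p j] between_ij[of p]
      assms bounds a_i_less_a_j nth_a_eq_iff[of p i] nth_a_eq_iff[of p j]
    by (cases "p = j"; cases "q = j") (auto simp: nth_swap_0 nat_neq_iff)
qed

lemma head_below_at_i_down:
  assumes head: "head_below_ascents n k upper" and "0 < i" "m = i" "a ! i < a ! 0"
  shows "head_below_ascents n k (swap_pos a 0 j)"
  unfolding head_below_ascents_def
proof (intro allI impI)
  fix p q assume "k \<le> p \<and> p < q \<and> q < n \<and> swap_pos a 0 j ! p < swap_pos a 0 j ! q"
  then show "swap_pos a 0 j ! 0 < swap_pos a 0 j ! p"
    using upper_head_belowD_a[OF head, of p q] upper_head_belowD_a[OF head, of p j]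
      upper_head_belowD_a[OF head, of j q] between_ij[of p] mid_0_less_m_a
      assms bounds a_i_less_a_j nth_a_eq_iff[of p i] nth_a_eq_iff[of p j]
    by (cases "p = j"; cases "q = j") (auto simp: nth_swap_0 nat_neq_iff)
qed

lemma head_below_at_j:
  assumes head: "head_below_ascents n k upper" and "0 < i" "m = j"
  shows "head_below_ascents n k (swap_pos a 0 i)"
  unfolding head_below_ascents_def
proof (intro allI impI)
  fix p q assume "k \<le> p \<and> p < q \<and> q < n \<and> swap_pos a 0 i ! p < swap_pos a 0 i ! q"
  then show "swap_pos a 0 i ! 0 < swap_pos a 0 i ! p"
    using upper_head_belowD_a[OF head, of p q] upper_head_belowD_a[OF head, of p j] between_0m_a[of p]
      mid_0_less_m_a assms bounds a_i_less_a_j nth_a_eq_iff[of p i] nth_a_eq_iff[of p j]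
      nth_a_eq_iff[of p 0]
    by (cases "p = j"; cases "q = j") (auto simp: nth_swap_0 nat_neq_iff)
qed

lemma head_below_first_near:
  assumes head: "head_below_ascents n k upper" and "i = 0" "m < k"
  shows "head_below_ascents n k (swap_pos a 0 m)"
  unfolding head_below_ascents_def
proof (intro allI impI)
  have "a ! j < a ! m"
    using mid_0_less_m_a assms bounds m_ne_j_if_i_0 by auto
  moreover fix p q assume "k \<le> p \<and> p < q \<and> q < n \<and> swap_pos a 0 m ! p < swap_pos a 0 m ! q"
  ultimately show "swap_pos a 0 m ! 0 < swap_pos a 0 m ! p"
    using upper_head_belowD_a[OF head, of p q] upper_head_belowD_a[OF head, of p j]
      upper_head_belowD_a[OF head, of j q] between_ij[of p] assms bounds a_i_less_a_j
      nth_a_eq_iff[of p 0] nth_a_eq_iff[of p j] m_ne_j_if_i_0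
    by (cases "p = j"; cases "q = j") (auto simp: nth_swap_0 nat_neq_iff)
qed

lemma head_below_apart:
  assumes head: "head_below_ascents n k upper" and "0 < i" "m \<noteq> i" "m \<noteq> j"
  shows "head_below_ascents n k (swap_pos a 0 m)"
  unfolding head_below_ascents_def
proof (intro allI impI)
  let ?h = "swap_pos a 0 m"
  fix p q assume pq: "k \<le> p \<and> p < q \<and> q < n \<and> ?h ! p < ?h ! q"
  have a_0_m: "a ! 0 < a ! m"
    using mid_0_less_m_a assms bounds by auto
  show "?h ! 0 < ?h ! p"
  proof (cases "p = j")
    case True
    then show ?thesis
      using upper_head_belowD_a[OF head, of j q] pq assms bounds a_i_less_a_j a_0_m
      by (auto simp: nth_swap_0 split: if_splits)
  next
    case p_ne_j: False
    show ?thesis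
    proof (cases "q = j")
      case False
      then show ?thesis
        using upper_head_belowD_a[OF head, of p q] pq p_ne_j assms bounds
        by (auto simp: nth_swap_0 split: if_splits)
    next
      case q_j: True
      show ?thesis
      proof (cases "?h ! p < a ! i")
        case True
        then show ?thesis
          using upper_head_belowD_a[OF head, of p j] pq p_ne_j q_j assms bounds
          by (auto simp: nth_swap_0 split: if_splits)
      next
        case False
        have "?h ! p \<noteq> a ! i"
          using pq nth_a_eq_iff[of p i] nth_a_eq_iff[of 0 i] assms bounds by (auto simp: nth_swap_0)
        then have between: "a ! i < ?h ! p" "?h ! p < a ! j"
          using False pq q_j assms bounds by (auto simp: nth_swap_0)
        show ?thesis
        proof (cases "p = m")
          case False
          then show ?thesis
            using between between_ij[of p] pq q_j assms bounds by (auto simp: nth_swap_0)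
        next
          case True
          have "a ! j < a ! m"
            using between_ij[of m] between True a_0_m pq q_j assms bounds nth_a_eq_iff[of m j]
            by (auto simp: nth_swap_0 nat_neq_iff)
          then show ?thesis
            using between_0m_a[of i] between True pq q_j assms bounds by (auto simp: nth_swap_0)
        qed
      qed
    qed
  qed
qed

lemma head_below_ascents_out:
  assumes "head_below_ascents n k upper"
  shows "head_below_ascents n k out"
proof (cases rule: square_cases)
  case first_far
  then have "head_below_ascents n k mid"
    using head_below_ascents_covering_swap_0[OF is_perm_swap_pos[OF perm] m_pos m_less_n cover_0m k_pos]
      assms bounds by simp
  then show ?thesis
    using first_far by (simp add: cell_out_pos_def)
qed (use assms head_below_first_near head_below_at_i_up head_below_at_i_down head_below_at_j
      head_below_apart in \<open>auto simp: cell_out_pos_def\<close>)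

lemma out_steps: "kcovers n 1 a out" "kcovers n k out upper"
proof -
  obtain i' j' where "0 < out_pos" "out_pos < n" "covering_swap a 0 out_pos"
    "i' < k" "k \<le> j'" "j' < n" "covering_swap out i' j'" "upper = swap_pos out i' j'"
    by (rule out_factorization)
  then show "kcovers n 1 a out" "kcovers n k out upper"
    using kcoversI[OF perm] kcoversI[OF is_perm_swap_pos[OF perm]] by simp_all
qed

lemma exch_min_out_upper: "exch_min out upper = cell_out_exch k a i j m"
proof -
  obtain i' j' where "0 < out_pos" "out_pos < n" "i' < k" "k \<le> j'" "j' < n"
    "covering_swap out i' j'" "upper = swap_pos out i' j'" "out ! i' = cell_out_exch k a i j m"
    by (rule out_factorization)
  then show ?thesis
    using exch_min_covering_swap[OF is_perm_swap_pos[OF perm]] by simp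
qed

text \<open>A middle element other than mid, entered by a 1-step and left by a k-step, factors
  t_{ij} t_{0m} as t_{0m'} t_{i'j'}, and the possible factorizations force m' = out_pos.\<close>

lemma swapped_middle_eq_out:
  assumes "swapped_middle n k 1 a mid upper b'"
  shows "b' = out"
proof -
  have steps: "kcovers n 1 a b'" "kcovers n k b' upper" "b' \<noteq> mid"
    using assms by (auto simp: swapped_middle_def)
  obtain m' where m': "0 < m'" "m' < n" "b' = swap_pos a 0 m'" "covering_swap a 0 m'"
    using steps(1) by (rule kcovers_1E)
  obtain i' j' where ij': "i' < k" "k \<le> j'" "j' < n" "upper = swap_pos b' i' j'" "covering_swap b' i' j'"
    using steps(2) by (rule kcoversE)
  have products_eq: "transpose i j (transpose 0 m p) = transpose 0 m' (transpose i' j' p)"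
    if "p < n" for p
  proof -
    have in_range: "transpose 0 m p < n" "transpose i' j' p < n"
      "transpose i j (transpose 0 m p) < n" "transpose 0 m' (transpose i' j' p) < n"
      using that bounds ij' m' by (auto simp: transpose_def)
    have "a ! transpose i j (transpose 0 m p) = upper ! p"
      using in_range bounds length_a by (simp add: nth_swap_pos_transpose)
    also have "\<dots> = a ! transpose 0 m' (transpose i' j' p)"
      using in_range bounds length_a ij'(1-4) m'(1-3) by (simp add: nth_swap_pos_transpose)
    finally show ?thesis
      using nth_a_eq_iff in_range by blast
  qed
  interpret products: transpose_products_eq n k i j m m' i' j'
    using products_eq bounds m' ij' by unfold_locales simp_all
  have "m' \<noteq> j" if "i = 0"
    using steps(3) m'(3) that by auto
  moreover have "a ! 0 < a ! m'"
    using m'(4) by (simp add: covering_swap_def)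
  moreover have "a ! i < a ! 0" if "m' = j" "i' = i" "j' = j" "0 < i"
    using ij'(5) that bounds m'(3) by (simp add: covering_swap_def nth_swap_0)
  ultimately show "b' = out"
    using m'(3) m_ne_j_if_i_0 products.first_moved products.m_eq_i products.m_eq_j products.apart
    by (cases rule: square_cases) (auto simp: cell_out_pos_def)
qed

lemma growth_cell_eq_out:
  assumes "growth_cell n k 1 a mid upper h"
  shows "h = out"
  using assms unfolding growth_cell_def
proof (elim conjE disjE)
  assume none: "\<nexists>b'. swapped_middle n k 1 a mid upper b'" and "h = mid"
  have "out = mid"
  proof (rule ccontr)
    assume "out \<noteq> mid"
    then have "swapped_middle n k 1 a mid upper out"
      using out_steps kcovers_imp_covers unfolding swapped_middle_def by blast
    with none show False
      by blast
  qed
  with \<open>h = mid\<close> show "h = out"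
    by simp
qed (rule swapped_middle_eq_out)

end

lemma growth_cell_k1:
  assumes cell: "growth_cell n k 1 a b c h" and "1 \<le> k" and head: "head_below_ascents n k c"
  shows "kcovers n 1 a h" "kcovers n k h c" "head_below_ascents n k h"
proof -
  have steps: "kcovers n k a b" "kcovers n 1 b c"
    using cell unfolding growth_cell_def by simp_all
  obtain i j where ij: "i < k" "k \<le> j" "j < n" "b = swap_pos a i j" "covering_swap a i j" "is_perm n a"
    using steps(1) by (rule kcoversE)
  obtain m where m: "0 < m" "m < n" "c = swap_pos b 0 m" "covering_swap b 0 m"
    using steps(2) by (rule kcovers_1E)
  interpret k1_square n k a i j m
    using ij m \<open>1 \<le> k\<close> by unfold_locales simp_all
  have "h = out"
    using cell ij(4) m(3) by (simp add: growth_cell_eq_out)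
  then show "kcovers n 1 a h" "kcovers n k h c" "head_below_ascents n k h"
    using out_steps head_below_ascents_out head ij(4) m(3) by simp_all
qed

section \<open>Two adjacent squares\<close>

locale k1_two_squares =
  fixes n k :: nat and a :: "nat list" and i0 j0 i1 j1 m2 :: nat
  assumes perm: "is_perm n a" and k_pos: "1 \<le> k"
    and first: "i0 < k" "k \<le> j0" "j0 < n" "covering_swap a i0 j0"
    and second: "i1 < k" "k \<le> j1" "j1 < n" "covering_swap (swap_pos a i0 j0) i1 j1"
    and increasing: "a ! i0 < swap_pos a i0 j0 ! i1"
    and right: "0 < m2" "m2 < n" "covering_swap (swap_pos (swap_pos a i0 j0) i1 j1) 0 m2"
    and head: "head_below_ascents n k (swap_pos (swap_pos (swap_pos a i0 j0) i1 j1) 0 m2)"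
begin

abbreviation g1 where "g1 \<equiv> swap_pos a i0 j0"
abbreviation g2 where "g2 \<equiv> swap_pos g1 i1 j1"
abbreviation h2 where "h2 \<equiv> swap_pos g2 0 m2"
abbreviation m1 where "m1 \<equiv> cell_out_pos k g1 i1 j1 m2"

sublocale second_square: k1_square n k g1 i1 j1 m2
  using perm k_pos first second right by unfold_locales (simp_all add: is_perm_swap_pos)

lemma length_a: "length a = n"
  using perm by (rule is_perm_length)

lemma nth_g1: "g1 ! p = (if p = j0 then a ! i0 else if p = i0 then a ! j0 else a ! p)"
  using length_a first by (simp add: nth_swap_pos)

lemma nth_g2: "g2 ! p = (if p = j1 then g1 ! i1 else if p = i1 then g1 ! j1 else g1 ! p)"
  using length_a second by (simp add: nth_swap_pos)

lemma nth_h2: "h2 ! p = (if p = m2 then g2 ! 0 else if p = 0 then g2 ! m2 else g2 ! p)"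
  using length_a right by (simp add: nth_swap_pos)

lemma j_pos: "0 < j0" "0 < j1"
  using k_pos first second by auto

lemma cover_0_m1: "0 < m1" "covering_swap g1 0 m1"
proof -
  obtain i' j' where "0 < m1" "m1 < n" "covering_swap g1 0 m1"
    by (rule second_square.out_factorization)
  then show "0 < m1" "covering_swap g1 0 m1"
    by simp_all
qed

lemma a_i0_less_a_0_if_second_at_j:
  assumes "0 < i0" "0 < i1" "m2 = j1"
  shows "a ! i0 < a ! 0"
proof -
  have g1_0: "g1 ! 0 = a ! 0"
    using assms j_pos by (simp add: nth_g1)
  have "j0 \<noteq> j1"
    using increasing second(4) nth_g1[of j1] by (auto simp: covering_swap_def)
  then have g2_vals: "g2 ! j0 = a ! i0" "g2 ! 0 = a ! 0" "g2 ! j1 = g1 ! i1"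
    using assms first second j_pos by (simp_all add: nth_g2 nth_g1)
  have up: "a ! 0 < g1 ! i1" "\<And>p. 0 < p \<Longrightarrow> p < j1 \<Longrightarrow> \<not> (a ! 0 < g2 ! p \<and> g2 ! p < g1 ! i1)"
    using right(3) g2_vals assms by (auto simp: covering_swap_def)
  have h2_vals: "h2 ! j1 = a ! 0" "h2 ! j0 = a ! i0" "h2 ! 0 = g1 ! i1"
    using nth_h2[of j1] nth_h2[of j0] nth_h2[of 0] assms g2_vals \<open>j0 \<noteq> j1\<close> j_pos by auto
  have "a ! i0 \<noteq> a ! 0"
    using is_perm_nth_eq_iff[OF perm, of i0 0] assms first by auto
  moreover have "\<not> a ! 0 < a ! i0"
  proof
    assume a_0_i0: "a ! 0 < a ! i0"
    show False
    proof (cases "j0 < j1")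
      case True
      then show False
        using up(2)[of j0] g2_vals a_0_i0 increasing j_pos by simp
    next
      case False
      then have "j1 < j0"
        using \<open>j0 \<noteq> j1\<close> by simp
      then have "h2 ! 0 < h2 ! j1"
        using head[unfolded head_below_ascents_def, rule_format, of j1 j0] first second a_0_i0 h2_vals
        by simp
      then show False
        using up(1) h2_vals by simp
    qed
  qed
  ultimately show ?thesis
    by simp
qed

lemma exch_increasing_first_far:
  assumes "i0 = 0" "k \<le> m1"
  shows "a ! j0 < cell_out_exch k g1 i1 j1 m2"
proof (cases "i1 = 0")
  case True
  then have "k \<le> m2"
    using assms by (auto simp: cell_out_pos_def split: if_splits)
  moreover have "g1 ! 0 = a ! j0"
    using assms j_pos nth_g1[of 0] by simp
  ultimately show ?thesis
    using True second(4) by (simp add: cell_out_exch_def covering_swap_def)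
next
  case False
  then have "m2 \<noteq> j1"
    using assms second by (auto simp: cell_out_pos_def)
  have "g1 ! i1 = a ! i1"
    using False assms first second nth_g1[of i1] by simp
  moreover have "a ! i1 \<noteq> a ! j0"
    using is_perm_nth_eq_iff[OF perm, of i1 j0] first second by auto
  moreover have "\<not> (a ! i0 < a ! i1 \<and> a ! i1 < a ! j0)"
    using first(2,4) assms False second by (auto simp: covering_swap_def)
  ultimately have "a ! j0 < g1 ! i1"
    using increasing by auto
  then show ?thesis
    using False \<open>m2 \<noteq> j1\<close> by (simp add: cell_out_exch_def)
qed

lemma exch_increasing: "cell_out_exch k a i0 j0 m1 < cell_out_exch k g1 i1 j1 m2"
proof -
  have a_i0_j0: "a ! i0 < a ! j0" and g1_i1_j1: "g1 ! i1 < g1 ! j1"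
    using first(4) second(4) by (simp_all add: covering_swap_def)
  have second_exch_big: "a ! i0 < cell_out_exch k g1 i1 j1 m2" if "\<not> (0 < i1 \<and> m2 = j1)"
    using that increasing g1_i1_j1 by (auto simp: cell_out_exch_def)
  consider (first_far) "i0 = 0" "k \<le> m1" | (first_at_j) "0 < i0" "m1 = j0"
    | (other) "\<not> (i0 = 0 \<and> k \<le> m1)" "\<not> (0 < i0 \<and> m1 = j0)"
    by blast
  then show ?thesis
  proof cases
    case first_far
    then show ?thesis
      using exch_increasing_first_far by (simp add: cell_out_exch_def)
  next
    case first_at_j
    have "g1 ! 0 < g1 ! j0"
      using cover_0_m1 first_at_j by (simp add: covering_swap_def)
    then have "a ! 0 < a ! i0"
      using first_at_j j_pos by (simp add: nth_g1)
    moreover have "\<not> (0 < i1 \<and> m2 = j1)"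
      using first_at_j first second by (auto simp: cell_out_pos_def)
    ultimately show ?thesis
      using first_at_j second_exch_big by (simp add: cell_out_exch_def)
  next
    case other
    then have exch_1: "cell_out_exch k a i0 j0 m1 = a ! i0"
      by (auto simp: cell_out_exch_def)
    show ?thesis
    proof (cases "0 < i1 \<and> m2 = j1")
      case True
      then have "cell_out_exch k g1 i1 j1 m2 = g1 ! 0"
        by (simp add: cell_out_exch_def)
      moreover have "a ! i0 < g1 ! 0"
        using a_i0_less_a_0_if_second_at_j True a_i0_j0 j_pos nth_g1[of 0]
        by (cases "i0 = 0") simp_all
      ultimately show ?thesis
        using exch_1 by simp
    qed (use exch_1 second_exch_big in simp)
  qed
qed

lemma top_row_increasing:
  assumes right_square: "growth_cell n k 1 g1 g2 h2 h1" and left_square: "growth_cell n k 1 a g1 h1 h0"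
  shows "exch_min h0 h1 < exch_min h1 h2"
proof -
  have h1: "h1 = second_square.out"
    using right_square by (rule second_square.growth_cell_eq_out)
  interpret first_square: k1_square n k a i0 j0 m1
    using perm k_pos first cover_0_m1 second_square.out_pos_less_n by unfold_locales simp_all
  have "h0 = first_square.out"
    using left_square h1 by (intro first_square.growth_cell_eq_out) simp
  then show ?thesis
    using h1 first_square.exch_min_out_upper second_square.exch_min_out_upper exch_increasing
    by simp
qed

end

section \<open>Rows and columns of the grid\<close>

definition kpath :: "nat \<Rightarrow> nat \<Rightarrow> (nat \<Rightarrow> nat list) \<Rightarrow> nat \<Rightarrow> bool" where
  "kpath n k f N \<longleftrightarrow> is_perm n (f 0) \<and> (\<forall>r<N. kcovers n k (f r) (f (Suc r)))"

definition increasing_path :: "(nat \<Rightarrow> nat list) \<Rightarrow> nat \<Rightarrow> bool" where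
  "increasing_path f N \<longleftrightarrow>
     (\<forall>r. Suc (Suc r) \<le> N \<longrightarrow> exch_min (f r) (f (Suc r)) < exch_min (f (Suc r)) (f (Suc (Suc r))))"

lemma kpath_is_perm: "kpath n k f N \<Longrightarrow> r \<le> N \<Longrightarrow> is_perm n (f r)"
proof (induction r)
  case (Suc r)
  then show ?case
    using kcovers_is_perm[of n k "f r" "f (Suc r)"] by (simp add: kpath_def)
qed (simp add: kpath_def)

lemma kchain_iff_kpath:
  assumes "length C = Suc N" "\<forall>r\<le>N. C ! r = f r"
  shows "kchain n k C \<longleftrightarrow> kpath n k f N"
proof -
  have "C \<noteq> []"
    using assms(1) by auto
  moreover have "hd C = f 0"
    using assms(2) \<open>C \<noteq> []\<close> by (simp add: hd_conv_nth)
  moreover have "(\<forall>i. i + 1 < length C \<longrightarrow> kcovers n k (C ! i) (C ! (i + 1))) \<longleftrightarrow>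
      (\<forall>r<N. kcovers n k (f r) (f (Suc r)))"
    using assms by auto
  ultimately show ?thesis
    by (simp add: kchain_def kpath_def)
qed

lemma increasing_chain_iff_increasing_path:
  assumes "length C = Suc N" "\<forall>r\<le>N. C ! r = f r"
  shows "increasing_chain C \<longleftrightarrow> increasing_path f N"
  using assms by (auto simp: increasing_chain_def increasing_path_def numeral_2_eq_2)

lemma increasing_path_1: "kpath n 1 f N \<Longrightarrow> increasing_path f N"
  unfolding kpath_def increasing_path_def
  by (metis Suc_le_eq Suc_lessD exch_min_1_chain)

text \<open>A row of squares is filled from right to left: the 1-step and the head property on
  the right side of a square pass to its left side.\<close>

lemma growth_row_k1_left_side:
  assumes "1 \<le> k" "\<forall>r<N. growth_square n k 1 G r s"
    and "kcovers n 1 (G N s) (G N (Suc s))" "head_below_ascents n k (G N (Suc s))" "r \<le> N"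
  shows "kcovers n 1 (G r s) (G r (Suc s)) \<and> head_below_ascents n k (G r (Suc s))"
  using assms(5)
proof (induction rule: inc_induct)
  case (step r)
  then show ?case
    using growth_cell_k1[OF _ assms(1)] assms(2) unfolding growth_square_def by blast
qed (use assms(3,4) in simp)

lemma growth_row_k1_increasing:
  assumes "1 \<le> k" "\<forall>r<N. growth_square n k 1 G r s"
    and row: "kpath n k (\<lambda>r. G r s) N" "increasing_path (\<lambda>r. G r s) N"
    and left: "\<And>r. r \<le> N \<Longrightarrow> kcovers n 1 (G r s) (G r (Suc s)) \<and> head_below_ascents n k (G r (Suc s))"
  shows "increasing_path (\<lambda>r. G r (Suc s)) N"
  unfolding increasing_path_def
proof (intro allI impI)
  fix r assume r: "Suc (Suc r) \<le> N"
  let ?a = "G r s"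
  have perm: "is_perm n ?a"
    using kpath_is_perm[OF row(1)] r by simp
  have steps: "kcovers n k ?a (G (Suc r) s)" "kcovers n k (G (Suc r) s) (G (Suc (Suc r)) s)"
    using row(1) r unfolding kpath_def by simp_all
  obtain i0 j0 where first: "i0 < k" "k \<le> j0" "j0 < n" "G (Suc r) s = swap_pos ?a i0 j0"
      "covering_swap ?a i0 j0"
    using steps(1) by (rule kcoversE)
  obtain i1 j1 where second: "i1 < k" "k \<le> j1" "j1 < n"
      "G (Suc (Suc r)) s = swap_pos (G (Suc r) s) i1 j1"
      "covering_swap (G (Suc r) s) i1 j1"
    using steps(2) by (rule kcoversE)
  have right: "kcovers n 1 (G (Suc (Suc r)) s) (G (Suc (Suc r)) (Suc s))"
      "head_below_ascents n k (G (Suc (Suc r)) (Suc s))"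
    using left[of "Suc (Suc r)"] r by simp_all
  obtain m2 where m2: "0 < m2" "m2 < n" "G (Suc (Suc r)) (Suc s) = swap_pos (G (Suc (Suc r)) s) 0 m2"
      "covering_swap (G (Suc (Suc r)) s) 0 m2"
    using right(1) by (rule kcovers_1E)
  have "exch_min ?a (G (Suc r) s) < exch_min (G (Suc r) s) (G (Suc (Suc r)) s)"
    using row(2) r unfolding increasing_path_def by simp
  then have increasing: "?a ! i0 < swap_pos ?a i0 j0 ! i1"
    using exch_min_covering_swap[OF perm] exch_min_covering_swap[OF is_perm_swap_pos[OF perm]]
      first second by simp
  interpret two_squares: k1_two_squares n k ?a i0 j0 i1 j1 m2
    using perm first second m2 increasing right(2) \<open>1 \<le> k\<close> by unfold_locales simp_all
  have "growth_square n k 1 G r s" "growth_square n k 1 G (Suc r) s"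
    using assms(2) r by simp_all
  then show "exch_min (G r (Suc s)) (G (Suc r) (Suc s))
      < exch_min (G (Suc r) (Suc s)) (G (Suc (Suc r)) (Suc s))"
    using two_squares.top_row_increasing first(4) second(4) m2(3) unfolding growth_square_def
    by simp
qed

lemma growth_row_k1:
  assumes "1 \<le> k" "\<forall>r<N. growth_square n k 1 G r s"
    and row: "kpath n k (\<lambda>r. G r s) N" "increasing_path (\<lambda>r. G r s) N"
    and right: "kcovers n 1 (G N s) (G N (Suc s))" "head_below_ascents n k (G N (Suc s))"
  shows "kpath n k (\<lambda>r. G r (Suc s)) N \<and> increasing_path (\<lambda>r. G r (Suc s)) N
    \<and> kcovers n 1 (G 0 s) (G 0 (Suc s))"
proof -
  have left: "kcovers n 1 (G r s) (G r (Suc s)) \<and> head_below_ascents n k (G r (Suc s))" if "r \<le> N" for r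
    using growth_row_k1_left_side[OF assms(1,2) right that] .
  have "kcovers n k (G r (Suc s)) (G (Suc r) (Suc s))" if "r < N" for r
  proof -
    have "growth_cell n k 1 (G r s) (G (Suc r) s) (G (Suc r) (Suc s)) (G r (Suc s))"
      using assms(2) that by (simp add: growth_square_def)
    then show ?thesis
      using growth_cell_k1(2)[OF _ assms(1)] left[of "Suc r"] that by simp
  qed
  moreover have "is_perm n (G 0 (Suc s))"
    using conjunct1[OF left[of 0]] by (rule kcovers_is_perm) simp
  ultimately have "kpath n k (\<lambda>r. G r (Suc s)) N"
    by (simp add: kpath_def)
  then show ?thesis
    using growth_row_k1_increasing[OF assms(1-4) left] left[of 0] by simp
qed

lemma growth_grid_k1:
  assumes "1 \<le> k" "\<forall>r<N1. \<forall>s<N2. growth_square n k 1 G r s"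
    and bottom: "kpath n k (\<lambda>r. G r 0) N1" "increasing_path (\<lambda>r. G r 0) N1"
    and right: "kpath n 1 (G N1) N2" "head_below_ascents n k (G N1 N2)"
  shows "kpath n k (\<lambda>r. G r N2) N1" "increasing_path (\<lambda>r. G r N2) N1" "kpath n 1 (G 0) N2"
proof -
  have right_steps: "kcovers n 1 (G N1 s) (G N1 (Suc s))" if "s < N2" for s
    using right(1) that by (simp add: kpath_def)
  have rows: "kpath n k (\<lambda>r. G r s) N1 \<and> increasing_path (\<lambda>r. G r s) N1
      \<and> (\<forall>s'<s. kcovers n 1 (G 0 s') (G 0 (Suc s')))" if "s \<le> N2" for s
    using that
  proof (induction s)
    case (Suc s)
    have "s < N2"
      using Suc.prems by simp
    have IH: "kpath n k (\<lambda>r. G r s) N1" "increasing_path (\<lambda>r. G r s) N1"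
      "\<forall>s'<s. kcovers n 1 (G 0 s') (G 0 (Suc s'))"
      using Suc by simp_all
    have "head_below_ascents n k (G N1 (Suc s))"
      using head_below_ascents_1_path[OF assms(1) right_steps right(2) Suc.prems] .
    moreover have "\<forall>r<N1. growth_square n k 1 G r s"
      using assms(2) \<open>s < N2\<close> by simp
    ultimately show ?case
      using growth_row_k1[OF assms(1) _ IH(1,2) right_steps[OF \<open>s < N2\<close>]] IH(3)
      by (auto simp: less_Suc_eq)
  qed (use bottom in simp)
  then show "kpath n k (\<lambda>r. G r N2) N1" "increasing_path (\<lambda>r. G r N2) N1"
    by simp_all
  show "kpath n 1 (G 0) N2"
    using rows[of N2] bottom(1) by (simp add: kpath_def)
qed

theorem lemma5p5:
  fixes n k :: nat and u v w :: "nat list" and C1 C2 C1' C2' :: "nat list list"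
  assumes "1 \<le> k" and "k \<le> n - 1"
    and "w \<in> S_dec n k"
    and "kchain n k C1" and "hd C1 = u" and "last C1 = v" and "increasing_chain C1"
    and "kchain n 1 C2" and "hd C2 = v" and "last C2 = w" and "increasing_chain C2"
    and "growth_output n k 1 C1 C2 C2' C1'"
  shows "kchain n 1 C2' \<and> increasing_chain C2' \<and> kchain n k C1' \<and> increasing_chain C1'"
proof -
  define N1 where "N1 = length C1 - 1"
  define N2 where "N2 = length C2 - 1"
  have nonempty: "C1 \<noteq> []" "C2 \<noteq> []"
    using assms(4,8) by (simp_all add: kchain_def)
  then have len: "length C1 = Suc N1" "length C2 = Suc N2"
    unfolding N1_def N2_def by simp_all
  have "last C1 = hd C2"
    using assms(6,9) by simp
  obtain G where bottom: "\<forall>r\<le>N1. C1 ! r = G r 0" and right: "\<forall>s\<le>N2. C2 ! s = G N1 s"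
    and squares: "\<forall>r<N1. \<forall>s<N2. growth_square n k 1 G r s"
    and C1': "length C1' = Suc N1" "\<forall>r\<le>N1. C1' ! r = G r N2"
    and C2': "length C2' = Suc N2" "\<forall>s\<le>N2. C2' ! s = G 0 s"
    by (rule growth_output_grid[OF assms(12) nonempty \<open>last C1 = hd C2\<close>, folded N1_def N2_def])
  have "kpath n k (\<lambda>r. G r 0) N1" "increasing_path (\<lambda>r. G r 0) N1" "kpath n 1 (G N1) N2"
    using assms(4,7,8) kchain_iff_kpath[OF len(1) bottom] kchain_iff_kpath[OF len(2) right]
      increasing_chain_iff_increasing_path[OF len(1) bottom]
    by simp_all
  moreover have "head_below_ascents n k (G N1 N2)"
    using S_dec_head_below_ascents[OF assms(3)] right assms(10) nonempty len
    by (simp add: last_conv_nth)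
  ultimately have "kpath n k (\<lambda>r. G r N2) N1" "increasing_path (\<lambda>r. G r N2) N1" "kpath n 1 (G 0) N2"
    using growth_grid_k1[OF assms(1) squares] by simp_all
  \<comment> \<open>C2' is increasing because every 1-chain is.\<close>
  then show ?thesis
    using kchain_iff_kpath[OF C1'] kchain_iff_kpath[OF C2'] increasing_chain_iff_increasing_path[OF C1']
      increasing_chain_iff_increasing_path[OF C2'] increasing_path_1
    by simp
qed

end
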